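(* Let $S\subset M$ be a saturated affine semigroup with $w(S)=S$ for all $w\in W$, and let $u\in D\cap S$. Writing $\Psi(\chi^u)=\sum_{v\in D\cap\Lambda}a_v\underline{\chi}^v$, every $v$ with $a_v\ne 0$ lies in $S$.
   Context: Setting: $V$ is a finite-dimensional real vector space with positive definite symmetric bilinear form $\langle\,,\rangle$; $M\subset V$ is a lattice; $W\subset\mathrm{GL}(V)$ is a finite group generated by reflections $s_\alpha(v)=v-2\frac{\langle v,\alpha\rangle}{\langle\alpha,\alpha\rangle}\alpha$ and preserving $M$; $\Delta=\{\alpha_1,\dots,\alpha_r\}\subset M$ is a simple system for $W$ (a linearly independent subset of a root system for $W$, spanning the same subspace, such that every root is a real combination of $\Delta$ with coefficients of one sign) chosen so that $M\subset\Lambda$, where $\Lambda=\{v\in V:2\frac{\langle v,\alpha_i\rangle}{\langle\alpha_i,\alpha_i\rangle}\in\mathbb{Z}\ \forall i\}$ is the weight group (such $\Delta$ exists, and $W$ preserves $\Lambda$). Let $Z=\bigcap_i\alpha_i^\perp$ and let $\lambda_1,\dots,\lambda_r\in Z^\perp$ be the fundamental weights, defined by $2\frac{\langle\lambda_i,\alpha_j\rangle}{\langle\alpha_j,\alpha_j\rangle}=\delta_{ij}$. Then $\Lambda=Z\oplus\Lambda_\circ$ with $\Lambda_\circ=\mathbb{Z}\langle\lambda_1,\dots,\lambda_r\rangle$, and the fundamental domain is $D=\{v:\langle v,\alpha_i\rangle\ge0\ \forall i\}=Z\times\mathbb{R}_{\ge0}\langle\lambda_1,\dots,\lambda_r\rangle$.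 A saturated affine semigroup is a finitely generated $\mathbb{Z}_{\ge0}$-submodule $S\subset M$ such that $km\in S$ with $k\in\mathbb{Z}_{>0}$, $m\in M$ implies $m\in S$. For a semigroup $S$, $\mathbb{Z}[S]$ is its semigroup ring with basis $\chi^s$, $\chi^s\chi^t=\chi^{s+t}$, and $W$ acts by $w\chi^s=\chi^{ws}$. $\Psi_\circ:\mathbb{Z}[D\cap\Lambda_\circ]\to\mathbb{Z}[\Lambda_\circ]^W$ is the ring homomorphism with $\Psi_\circ(\chi^{\lambda_i})=\sum_{v\in W\lambda_i}\chi^v$, and $\Psi:\mathbb{Z}[D\cap\Lambda]\to\mathbb{Z}[\Lambda]^W$ is its $\mathbb{Z}[Z]$-linear extension: for $u=z+u_\circ$ with $z\in Z$, $u_\circ\in D\cap\Lambda_\circ$, $\Psi(\chi^u)=\chi^z\Psi_\circ(\chi^{u_\circ})$. For $u\in D\cap\Lambda$, $\underline{\chi}^u:=\sum_{v\in Wu}\chi^v$; these form a $\mathbb{Z}$-basis of $\mathbb{Z}[\Lambda]^W$. *)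

theory Defs
  imports "HOL-Analysis.Analysis" "HOL-Library.Poly_Mapping"
begin

text \<open>The real vector space V with its positive definite form is modelled by a type
  of class euclidean_space with its inner product. Elements of the semigroup ring
  Z[Lambda] are finitely supported integer-valued functions on V with the convolution
  product (type poly_mapping); the basis element chi^v is (single v 1).\<close>

definition refl :: "'a::real_inner \<Rightarrow> 'a \<Rightarrow> 'a" where
  "refl \<alpha> v = v - (2 * (v \<bullet> \<alpha>) / (\<alpha> \<bullet> \<alpha>)) *\<^sub>R \<alpha>"

inductive_set genmon :: "('a \<Rightarrow> 'a) set \<Rightarrow> ('a \<Rightarrow> 'a) set" for R where
  gen_id: "id \<in> genmon R"
| gen_step: "r \<in> R \<Longrightarrow> w \<in> genmon R \<Longrightarrow> r \<circ> w \<in> genmon R"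

text \<open>A finite group generated by reflections (for a finite set of maps, the monoid
  generated by involutions is the group generated by them).\<close>
definition finite_reflection_group :: "('a::real_inner \<Rightarrow> 'a) set \<Rightarrow> bool" where
  "finite_reflection_group W \<longleftrightarrow> finite W \<and>
     (\<exists>R. 0 \<notin> R \<and> W = genmon (refl ` R))"

definition lattice :: "'a::euclidean_space set \<Rightarrow> bool" where
  "lattice M \<longleftrightarrow> (\<exists>B. independent B \<and> span B = UNIV \<and>
     M = {\<Sum>b\<in>B. of_int (c b) *\<^sub>R b | c. True})"

definition root_system :: "('a::real_inner \<Rightarrow> 'a) set \<Rightarrow> 'a set \<Rightarrow> bool" where
  "root_system W \<Phi> \<longleftrightarrow> finite \<Phi> \<and> 0 \<notin> \<Phi> \<and>
     (\<forall>\<alpha>\<in>\<Phi>. \<forall>c::real. c *\<^sub>R \<alpha> \<in> \<Phi> \<longleftrightarrow> c = 1 \<or> c = -1) \<and>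
     (\<forall>\<alpha>\<in>\<Phi>. refl \<alpha> ` \<Phi> = \<Phi>) \<and>
     W = genmon (refl ` \<Phi>)"

definition simple_system :: "('a::real_inner \<Rightarrow> 'a) set \<Rightarrow> 'a set \<Rightarrow> bool" where
  "simple_system W \<Delta> \<longleftrightarrow> (\<exists>\<Phi>. root_system W \<Phi> \<and> \<Delta> \<subseteq> \<Phi> \<and> independent \<Delta> \<and>
     span \<Delta> = span \<Phi> \<and>
     (\<forall>\<beta>\<in>\<Phi>. \<exists>c. \<beta> = (\<Sum>\<alpha>\<in>\<Delta>. c \<alpha> *\<^sub>R \<alpha>) \<and>
        ((\<forall>\<alpha>\<in>\<Delta>. c \<alpha> \<ge> (0::real)) \<or> (\<forall>\<alpha>\<in>\<Delta>. c \<alpha> \<le> 0))))"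

definition cpair :: "'a::real_inner \<Rightarrow> 'a \<Rightarrow> real" where
  "cpair v \<alpha> = 2 * (v \<bullet> \<alpha>) / (\<alpha> \<bullet> \<alpha>)"

definition weights :: "'a::real_inner set \<Rightarrow> 'a set" where
  "weights \<Delta> = {v. \<forall>\<alpha>\<in>\<Delta>. cpair v \<alpha> \<in> \<int>}"

definition Zsp :: "'a::real_inner set \<Rightarrow> 'a set" where
  "Zsp \<Delta> = {v. \<forall>\<alpha>\<in>\<Delta>. v \<bullet> \<alpha> = 0}"

definition fdom :: "'a::real_inner set \<Rightarrow> 'a set" where
  "fdom \<Delta> = {v. \<forall>\<alpha>\<in>\<Delta>. v \<bullet> \<alpha> \<ge> 0}"

definition fund_weight :: "'a::euclidean_space set \<Rightarrow> 'a \<Rightarrow> 'a" where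
  "fund_weight \<Delta> \<alpha> = (THE l. l \<in> span \<Delta> \<and>
      (\<forall>\<beta>\<in>\<Delta>. cpair l \<beta> = (if \<beta> = \<alpha> then 1 else 0)))"

definition chi :: "'a \<Rightarrow> ('a \<Rightarrow>\<^sub>0 int)" where
  "chi v = Poly_Mapping.single v 1"

definition orbsum :: "('a \<Rightarrow> 'a) set \<Rightarrow> 'a \<Rightarrow> ('a \<Rightarrow>\<^sub>0 int)" where
  "orbsum W v = (\<Sum>x\<in>(\<lambda>w. w v) ` W. chi x)"

text \<open>Psi(chi^u) for u in D cap Lambda: writing u = z + sum_alpha n_alpha lambda_alpha
  with z in Z and n_alpha = cpair u alpha (nonnegative integer), Psi(chi^u) =
  chi^z * prod_alpha Psi_0(chi^lambda_alpha)^n_alpha, with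
  Psi_0(chi^lambda_alpha) the orbit sum of lambda_alpha (Psi_0 a ring hom).\<close>
definition Psi :: "('a::euclidean_space \<Rightarrow> 'a) set \<Rightarrow> 'a set \<Rightarrow> 'a \<Rightarrow> ('a \<Rightarrow>\<^sub>0 int)" where
  "Psi W \<Delta> u =
     (let n = (\<lambda>\<alpha>. nat \<lfloor>cpair u \<alpha>\<rfloor>);
          z = u - (\<Sum>\<alpha>\<in>\<Delta>. real (n \<alpha>) *\<^sub>R fund_weight \<Delta> \<alpha>)
      in chi z * (\<Prod>\<alpha>\<in>\<Delta>. (orbsum W (fund_weight \<Delta> \<alpha>)) ^ n \<alpha>))"

definition orb_coeffs :: "('a::euclidean_space \<Rightarrow> 'a) set \<Rightarrow> 'a set \<Rightarrow> ('a \<Rightarrow>\<^sub>0 int) \<Rightarrow> 'a \<Rightarrow> int" where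
  "orb_coeffs W \<Delta> f = (THE a. finite {v. a v \<noteq> 0} \<and>
      (\<forall>v. a v \<noteq> 0 \<longrightarrow> v \<in> fdom \<Delta> \<inter> weights \<Delta>) \<and>
      f = (\<Sum>v\<in>{v. a v \<noteq> 0}. of_int (a v) * orbsum W v))"

definition saturated_affine_semigroup :: "'a::real_vector set \<Rightarrow> 'a set \<Rightarrow> bool" where
  "saturated_affine_semigroup M S \<longleftrightarrow> S \<subseteq> M \<and>
     (\<exists>G. finite G \<and> G \<subseteq> M \<and> S = {\<Sum>g\<in>G. of_nat (n g) *\<^sub>R g | n. True}) \<and>
     (\<forall>k::nat. \<forall>m\<in>M. k > 0 \<longrightarrow> of_nat k *\<^sub>R m \<in> S \<longrightarrow> m \<in> S)"

end

theory Submission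
  imports Defs
begin

text \<open>Psi(chi^u) is chi^z, with z fixed by W, times a product of powers of orbit sums of
  fundamental weights, so its support consists of sums of orbit points. For dominant l and mu the
  rational convex hulls satisfy conv(W l) + conv(W mu) \<subseteq> conv(W (l + mu)), because l + w mu
  can be pushed up to l + mu by simple reflections along segments inside the hull; hence the support
  lies in conv(W u) and in the coset u + (root lattice). Psi(chi^u) is W-invariant and every orbit
  has exactly one dominant point, so a_v is the coefficient of chi^v itself, and such v lies in
  conv(W u) \<inter> M. Clearing the rational denominators gives k v \<in> S for some k > 0, and
  saturation of S gives v \<in> S.\<close>

section \<open>Reflections and coroot pairings\<close>

lemma refl_eq_cpair: "refl a x = x - cpair x a *\<^sub>R a"
  by (simp add: refl_def cpair_def)

lemma refl_linear: "linear (refl a)"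
  by (rule linearI) (auto simp: refl_def inner_add_left algebra_simps add_divide_distrib scaleR_add_left)

lemma refl_inner:
  assumes "a \<noteq> 0" shows "refl a x \<bullet> refl a y = x \<bullet> y"
proof -
  have "a \<bullet> a \<noteq> 0" using assms by simp
  then show ?thesis
    unfolding refl_def by (simp add: inner_diff_left inner_diff_right algebra_simps inner_commute)
qed

lemma refl_self: "a \<noteq> 0 \<Longrightarrow> refl a a = - a"
  by (simp add: refl_def algebra_simps) (metis scaleR_2 add_diff_cancel_left' diff_add_cancel)

lemma refl_refl:
  assumes "a \<noteq> 0" shows "refl a (refl a x) = x"
proof -
  have "a \<bullet> a \<noteq> 0" using assms by simp
  then show ?thesis unfolding refl_def by (simp add: inner_diff_left algebra_simps)
qed

lemma refl_uminus: "refl (- a) = refl a"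
  by (rule ext) (simp add: refl_def)

lemma refl_conj_isometry:
  assumes "linear u" "\<And>x y. u x \<bullet> u y = x \<bullet> y"
  shows "refl (u a) (u x) = u (refl a x)"
  using assms unfolding refl_def by (simp add: linear_diff linear_scale)

lemma cpair_add: "cpair (x + y) a = cpair x a + cpair y a"
  by (simp add: cpair_def inner_add_left add_divide_distrib)

lemma cpair_diff: "cpair (x - y) a = cpair x a - cpair y a"
  by (simp add: cpair_def inner_diff_left diff_divide_distrib)

lemma cpair_scale: "cpair (c *\<^sub>R x) a = c * cpair x a"
  by (simp add: cpair_def)

lemma cpair_sum: "cpair (sum f A) a = (\<Sum>i\<in>A. cpair (f i) a)"
  by (simp add: cpair_def inner_sum_left sum_divide_distrib sum_distrib_left)

lemma cpair_self: "a \<noteq> 0 \<Longrightarrow> cpair a a = 2"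
  by (simp add: cpair_def)

lemma cpair_refl: "cpair (refl a x) b = cpair x b - cpair x a * cpair a b"
  by (simp add: refl_eq_cpair cpair_diff cpair_scale)

lemma cpair_refl_self: "a \<noteq> 0 \<Longrightarrow> cpair (refl a x) a = - cpair x a"
  by (simp add: cpair_refl cpair_self)

lemma cpair_nonneg_iff:
  assumes "a \<noteq> 0" shows "0 \<le> cpair x a \<longleftrightarrow> 0 \<le> x \<bullet> a"
proof -
  have "0 < a \<bullet> a" using assms by simp
  then show ?thesis unfolding cpair_def by (smt (verit) divide_nonneg_pos divide_neg_pos)
qed

lemma weights_diff: "x \<in> weights D \<Longrightarrow> y \<in> weights D \<Longrightarrow> x - y \<in> weights D"
  by (auto simp: weights_def cpair_diff)

fun refl_word :: "'a::real_inner list \<Rightarrow> 'a \<Rightarrow> 'a" where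
  "refl_word [] = id"
| "refl_word (a # as) = refl a \<circ> refl_word as"

lemma refl_word_append: "refl_word (xs @ ys) = refl_word xs \<circ> refl_word ys"
  by (induction xs) auto

lemma refl_word_linear: "linear (refl_word as)"
proof (induction as)
  case (Cons a as)
  then show ?case using linear_compose[OF Cons refl_linear] by (simp add: o_def)
qed (simp add: bounded_linear.linear)

lemma exists_span_inner_eq:
  fixes D :: "'a::euclidean_space set"
  assumes "independent D"
  shows "\<exists>l\<in>span D. \<forall>b\<in>D. l \<bullet> b = f b"
proof -
  obtain g where g: "linear g" "\<forall>x\<in>D. g x = f x"
    using linear_independent_extend[OF assms] by blast
  define r where "r = (\<Sum>b\<in>Basis. g b *\<^sub>R b)"
  have gr: "g x = x \<bullet> r" for x
  proof -
    have "g x = g (\<Sum>b\<in>Basis. (x \<bullet> b) *\<^sub>R b)" by (simp add: euclidean_representation)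
    also have "\<dots> = x \<bullet> r"
      using g(1) by (simp add: linear_sum linear_scale r_def inner_sum_right mult.commute)
    finally show ?thesis .
  qed
  obtain y z where yz: "y \<in> span D" "\<And>w. w \<in> span D \<Longrightarrow> orthogonal z w" "r = y + z"
    using orthogonal_subspace_decomp_exists by blast
  have "y \<bullet> b = f b" if "b \<in> D" for b
  proof -
    have "z \<bullet> b = 0" using yz(2)[of b] that by (simp add: orthogonal_def span_base)
    then have "y \<bullet> b = r \<bullet> b" by (simp add: yz(3) inner_add_left)
    also have "\<dots> = f b" using gr[of b] g(2) that by (simp add: inner_commute)
    finally show ?thesis .
  qed
  with yz(1) show ?thesis by blast
qed

section \<open>Simple systems and their Weyl groups\<close>

locale simple_root_system =
  fixes Phi Del :: "'a::euclidean_space set"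
  assumes finite_roots: "finite Phi"
    and zero_notin_roots: "0 \<notin> Phi"
    and root_multiples: "\<And>a c. a \<in> Phi \<Longrightarrow> c *\<^sub>R a \<in> Phi \<longleftrightarrow> c = 1 \<or> c = -1"
    and refl_roots: "\<And>a. a \<in> Phi \<Longrightarrow> refl a ` Phi = Phi"
    and simple_roots: "Del \<subseteq> Phi"
    and independent_simple: "independent Del"
    and root_sign: "\<And>b. b \<in> Phi \<Longrightarrow> \<exists>c. b = (\<Sum>a\<in>Del. c a *\<^sub>R a) \<and>
                      ((\<forall>a\<in>Del. c a \<ge> 0) \<or> (\<forall>a\<in>Del. c a \<le> 0))"
begin

lemma finite_simple: "finite Del"
  using finite_roots simple_roots finite_subset by blast

lemma simple_nonzero: "a \<in> Del \<Longrightarrow> a \<noteq> 0"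
  using zero_notin_roots simple_roots by blast

lemma simple_inner_pos: "a \<in> Del \<Longrightarrow> 0 < a \<bullet> a"
  using simple_nonzero by simp

lemma uminus_root: "b \<in> Phi \<Longrightarrow> - b \<in> Phi"
  using root_multiples[of b "-1"] by simp

lemma refl_root: "a \<in> Phi \<Longrightarrow> b \<in> Phi \<Longrightarrow> refl a b \<in> Phi"
  using refl_roots by blast

lemma simple_coeffs_unique:
  assumes "(\<Sum>a\<in>Del. c a *\<^sub>R a) = (\<Sum>a\<in>Del. d a *\<^sub>R a)" "a \<in> Del"
  shows "c a = d a"
proof (rule ccontr)
  assume "c a \<noteq> d a"
  have "(\<Sum>a\<in>Del. (c a - d a) *\<^sub>R a) = 0"
    using assms(1) by (simp add: scaleR_diff_left sum_subtractf)
  then have "dependent Del"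
    unfolding dependent_finite[OF finite_simple] using \<open>c a \<noteq> d a\<close> assms(2)
    by (intro exI[of _ "\<lambda>a. c a - d a"]) auto
  then show False using independent_simple by simp
qed

lemma sum_simple_delta: "a \<in> Del \<Longrightarrow> (\<Sum>g\<in>Del. (if g = a then t else 0) *\<^sub>R g) = t *\<^sub>R a"
proof -
  assume a: "a \<in> Del"
  have "(\<Sum>g\<in>Del. (if g = a then t else 0) *\<^sub>R g) = (\<Sum>g\<in>Del. if g = a then t *\<^sub>R g else 0)"
    by (rule sum.cong) auto
  also have "\<dots> = t *\<^sub>R a" using a finite_simple by (simp add: sum.delta)
  finally show ?thesis .
qed

definition pos_cone :: "'a \<Rightarrow> bool" where
  "pos_cone x \<longleftrightarrow> (\<exists>c. x = (\<Sum>a\<in>Del. c a *\<^sub>R a) \<and> (\<forall>a\<in>Del. 0 \<le> c a))"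

lemma root_pos_cone_cases: "b \<in> Phi \<Longrightarrow> pos_cone b \<or> pos_cone (- b)"
proof -
  assume "b \<in> Phi"
  from root_sign[OF this] obtain c where c: "b = (\<Sum>a\<in>Del. c a *\<^sub>R a)"
    "(\<forall>a\<in>Del. c a \<ge> 0) \<or> (\<forall>a\<in>Del. c a \<le> 0)" by blast
  show ?thesis
  proof (cases "\<forall>a\<in>Del. c a \<ge> 0")
    case True
    then show ?thesis using c(1) unfolding pos_cone_def by blast
  next
    case False
    then have "\<forall>a\<in>Del. - c a \<ge> 0" using c(2) by auto
    moreover have "- b = (\<Sum>a\<in>Del. (- c a) *\<^sub>R a)" using c(1) by (simp add: sum_negf)
    ultimately show ?thesis unfolding pos_cone_def by (intro disjI2 exI[of _ "\<lambda>a. - c a"]) simp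
  qed
qed

lemma root_not_pos_cone_both:
  assumes "b \<in> Phi" "pos_cone b" "pos_cone (- b)"
  shows False
proof -
  obtain c where c: "b = (\<Sum>a\<in>Del. c a *\<^sub>R a)" "\<forall>a\<in>Del. 0 \<le> c a"
    using assms(2) pos_cone_def by auto
  obtain d where d: "- b = (\<Sum>a\<in>Del. d a *\<^sub>R a)" "\<forall>a\<in>Del. 0 \<le> d a"
    using assms(3) pos_cone_def by auto
  have "b = (\<Sum>a\<in>Del. (- d a) *\<^sub>R a)"
    using arg_cong[OF d(1), of uminus] by (simp add: sum_negf)
  then have "c a = - d a" if "a \<in> Del" for a
    using simple_coeffs_unique[of c "\<lambda>a. - d a"] c(1) that by simp
  then have "\<forall>a\<in>Del. c a = 0" using c(2) d(2) by force
  then have "b = 0" using c(1) by simp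
  then show False using assms(1) zero_notin_roots by simp
qed

lemma pos_cone_simple: "a \<in> Del \<Longrightarrow> pos_cone a"
  unfolding pos_cone_def
  by (rule exI[of _ "\<lambda>g. if g = a then 1 else 0"]) (simp add: sum_simple_delta)

lemma fdom_inner_pos_cone: assumes "x \<in> fdom Del" "pos_cone y" shows "0 \<le> x \<bullet> y"
proof -
  obtain c where c: "y = (\<Sum>a\<in>Del. c a *\<^sub>R a)" "\<forall>a\<in>Del. 0 \<le> c a"
    using assms(2) pos_cone_def by auto
  have "x \<bullet> y = (\<Sum>a\<in>Del. c a * (x \<bullet> a))" by (simp add: c(1) inner_sum_right)
  also have "\<dots> \<ge> 0" using c(2) assms(1) by (intro sum_nonneg) (simp add: fdom_def)
  finally show ?thesis .
qed

text \<open>The reflection in a simple root a changes only the coefficient of a, so a positive root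
  that it makes negative is a positive multiple of a.\<close>
lemma refl_simple_pos_root:
  assumes a: "a \<in> Del" and b: "b \<in> Phi" "pos_cone b" "b \<noteq> a"
  shows "pos_cone (refl a b)"
proof (rule ccontr)
  assume "\<not> pos_cone (refl a b)"
  moreover have "refl a b \<in> Phi" using refl_root a b(1) simple_roots by blast
  ultimately have "pos_cone (- refl a b)" using root_pos_cone_cases by blast
  then obtain d where d: "- refl a b = (\<Sum>g\<in>Del. d g *\<^sub>R g)" "\<forall>g\<in>Del. 0 \<le> d g"
    using pos_cone_def by auto
  obtain c where c: "b = (\<Sum>g\<in>Del. c g *\<^sub>R g)" "\<forall>g\<in>Del. 0 \<le> c g"
    using b(2) pos_cone_def by auto
  have "(\<Sum>g\<in>Del. (c g - (if g = a then cpair b a else 0)) *\<^sub>R g) = refl a b"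
    using a by (simp add: refl_eq_cpair c(1) scaleR_diff_left sum_subtractf sum_simple_delta)
  also have "refl a b = (\<Sum>g\<in>Del. (- d g) *\<^sub>R g)"
    using arg_cong[OF d(1), of uminus] by (simp add: sum_negf)
  finally have "c g = - d g" if "g \<in> Del" "g \<noteq> a" for g
    using simple_coeffs_unique[of "\<lambda>g. c g - (if g = a then cpair b a else 0)" "\<lambda>g. - d g" g] that
    by simp
  then have "\<forall>g\<in>Del. g \<noteq> a \<longrightarrow> c g = 0" using c(2) d(2) by force
  then have "b = (\<Sum>g\<in>Del. (if g = a then c a else 0) *\<^sub>R g)"
    unfolding c(1) by (intro sum.cong) auto
  then have "b = c a *\<^sub>R a" using a by (simp add: sum_simple_delta)
  then have "c a = 1 \<or> c a = -1" using root_multiples[of a "c a"] a b(1) simple_roots by auto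
  then have "c a = 1" using c(2) a by force
  then show False using \<open>b = c a *\<^sub>R a\<close> b(3) by simp
qed

lemma refl_word_inner: "set as \<subseteq> Phi \<Longrightarrow> refl_word as x \<bullet> refl_word as y = x \<bullet> y"
proof (induction as)
  case (Cons a as)
  then have "a \<noteq> 0" using zero_notin_roots by auto
  then show ?case using Cons by (simp add: refl_inner)
qed simp

lemma refl_word_root: "set as \<subseteq> Phi \<Longrightarrow> b \<in> Phi \<Longrightarrow> refl_word as b \<in> Phi"
  by (induction as) (auto simp: refl_root)

lemma refl_word_rev: "set as \<subseteq> Phi \<Longrightarrow> refl_word (rev as) (refl_word as x) = x"
proof (induction as arbitrary: x)
  case (Cons a as)
  then have "a \<noteq> 0" using zero_notin_roots by auto
  then show ?case using Cons by (simp add: refl_word_append refl_refl)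
qed simp

lemma refl_word_conj: "set as \<subseteq> Phi \<Longrightarrow> refl (refl_word as a) (refl_word as x) = refl_word as (refl a x)"
  by (rule refl_conj_isometry[OF refl_word_linear refl_word_inner])

text \<open>x \<bullet> rho is the height of x, the sum of its coordinates in the simple roots
  (rho is not the half-sum of the positive roots).\<close>
definition rho :: 'a where
  "rho = (SOME l. l \<in> span Del \<and> (\<forall>b\<in>Del. l \<bullet> b = 1))"

lemma inner_simple_rho: "a \<in> Del \<Longrightarrow> a \<bullet> rho = 1"
proof -
  have "\<exists>l. l \<in> span Del \<and> (\<forall>b\<in>Del. l \<bullet> b = 1)"
    using exists_span_inner_eq[OF independent_simple, of "\<lambda>_. 1"] by blast
  from someI_ex[OF this] show "a \<in> Del \<Longrightarrow> a \<bullet> rho = 1" unfolding rho_def by (simp add: inner_commute)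
qed

lemma inner_refl_simple_rho: "a \<in> Del \<Longrightarrow> refl a x \<bullet> rho = x \<bullet> rho - cpair x a"
  by (simp add: refl_eq_cpair inner_diff_left inner_simple_rho)

lemma pos_root_to_simple:
  "b \<in> Phi \<Longrightarrow> pos_cone b \<Longrightarrow> \<exists>as a. set as \<subseteq> Del \<and> a \<in> Del \<and> refl_word as b = a"
proof (induction "card {d\<in>Phi. d \<bullet> rho < b \<bullet> rho}" arbitrary: b rule: less_induct)
  case less
  show ?case
  proof (cases "b \<in> Del")
    case True
    then show ?thesis by (intro exI[of _ "[]"] exI[of _ b]) auto
  next
    case False
    obtain c where c: "b = (\<Sum>a\<in>Del. c a *\<^sub>R a)" "\<forall>a\<in>Del. 0 \<le> c a"
      using less(3) pos_cone_def by auto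
    have "0 < b \<bullet> b" using zero_notin_roots less(2) by auto
    also have "b \<bullet> b = (\<Sum>a\<in>Del. c a * (b \<bullet> a))"
      by (subst (2) c(1)) (simp add: inner_sum_right)
    finally obtain a where a: "a \<in> Del" "0 < b \<bullet> a"
      using c(2) sum_nonpos[of Del "\<lambda>a. c a * (b \<bullet> a)"] by (force simp: mult_nonneg_nonpos)
    define b' where "b' = refl a b"
    have b': "b' \<in> Phi" "pos_cone b'"
      using refl_root[OF _ less(2)] refl_simple_pos_root[OF a(1) less(2,3)] a(1) simple_roots False
      by (auto simp: b'_def)
    have "0 < cpair b a" using a(2) simple_inner_pos[OF a(1)] by (simp add: cpair_def)
    then have "b' \<bullet> rho < b \<bullet> rho" using inner_refl_simple_rho[OF a(1)] by (simp add: b'_def)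
    then have "{d\<in>Phi. d \<bullet> rho < b' \<bullet> rho} \<subset> {d\<in>Phi. d \<bullet> rho < b \<bullet> rho}"
      using b'(1) by auto
    then have "card {d\<in>Phi. d \<bullet> rho < b' \<bullet> rho} < card {d\<in>Phi. d \<bullet> rho < b \<bullet> rho}"
      by (rule psubset_card_mono[rotated]) (simp add: finite_roots)
    from less(1)[OF this b'] obtain as a' where "set as \<subseteq> Del" "a' \<in> Del" "refl_word as b' = a'"
      by blast
    then show ?thesis
      using a by (intro exI[of _ "as @ [a]"] exI[of _ a']) (auto simp: refl_word_append b'_def)
  qed
qed

lemma refl_root_word: assumes "b \<in> Phi" obtains as where "set as \<subseteq> Del" "refl b = refl_word as"
proof -
  have "\<exists>as. set as \<subseteq> Del \<and> refl b = refl_word as" if b: "b \<in> Phi" "pos_cone b" for b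
  proof -
    obtain as a where as: "set as \<subseteq> Del" "a \<in> Del" "refl_word as b = a"
      using pos_root_to_simple[OF b] by blast
    then have Phi: "set as \<subseteq> Phi" using simple_roots by blast
    have "refl b x = refl_word (rev as @ a # as) x" for x
      using refl_word_conj[OF Phi, of b x] refl_word_rev[OF Phi] as(3)
      by (simp add: refl_word_append)
    then show ?thesis using as by (intro exI[of _ "rev as @ a # as"]) auto
  qed
  then show ?thesis
    using that assms root_pos_cone_cases[OF assms] uminus_root[OF assms] refl_uminus[of b] by metis
qed

abbreviation weyl :: "('a \<Rightarrow> 'a) set" where
  "weyl \<equiv> genmon (refl ` Phi)"

lemma weyl_iff_word: "w \<in> weyl \<longleftrightarrow> (\<exists>as. set as \<subseteq> Del \<and> w = refl_word as)"
proof
  assume "w \<in> weyl"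
  then show "\<exists>as. set as \<subseteq> Del \<and> w = refl_word as"
  proof (induction rule: genmon.induct)
    case gen_id
    then show ?case by (intro exI[of _ "[]"]) auto
  next
    case (gen_step r w)
    then obtain b as where "b \<in> Phi" "r = refl b" "set as \<subseteq> Del" "w = refl_word as" by blast
    moreover obtain bs where "set bs \<subseteq> Del" "refl b = refl_word bs"
      using refl_root_word[OF \<open>b \<in> Phi\<close>] by blast
    ultimately show ?case by (intro exI[of _ "bs @ as"]) (auto simp: refl_word_append)
  qed
next
  assume "\<exists>as. set as \<subseteq> Del \<and> w = refl_word as"
  then obtain as where as: "set as \<subseteq> Del" "w = refl_word as" by blast
  have "refl_word as \<in> weyl" using as(1)
  proof (induction as)
    case Nil
    then show ?case using genmon.gen_id by (simp add: id_def)
  next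
    case (Cons a as)
    then have "refl a \<in> refl ` Phi" using simple_roots by auto
    then show ?case using Cons genmon.gen_step[of "refl a" "refl ` Phi" "refl_word as"] by (simp add: o_def)
  qed
  then show "w \<in> weyl" using as by simp
qed

lemma weyl_wordE: assumes "w \<in> weyl" obtains as where "set as \<subseteq> Del" "w = refl_word as"
  using weyl_iff_word assms by blast

lemma weyl_linear: "w \<in> weyl \<Longrightarrow> linear w"
  by (erule weyl_wordE) (simp add: refl_word_linear)

lemma weyl_id: "id \<in> weyl"
  by (rule genmon.gen_id)

lemma weyl_refl: "a \<in> Phi \<Longrightarrow> refl a \<in> weyl"
  using genmon.gen_step[OF _ genmon.gen_id, of "refl a" "refl ` Phi"] by simp

lemma weyl_comp: assumes "w \<in> weyl" "v \<in> weyl" shows "w \<circ> v \<in> weyl"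
proof -
  obtain as bs where "set as \<subseteq> Del" "w = refl_word as" "set bs \<subseteq> Del" "v = refl_word bs"
    using assms by (metis weyl_wordE)
  then show ?thesis by (auto simp: weyl_iff_word refl_word_append intro!: exI[of _ "as @ bs"])
qed

lemma weyl_inverse:
  assumes "w \<in> weyl"
  obtains v where "v \<in> weyl" "\<And>x. v (w x) = x" "\<And>x. w (v x) = x"
proof -
  obtain as where as: "set as \<subseteq> Del" "w = refl_word as" using assms by (rule weyl_wordE)
  then have Phi: "set as \<subseteq> Phi" using simple_roots by blast
  have "refl_word (rev as) \<in> weyl" using as(1) by (auto simp: weyl_iff_word intro!: exI[of _ "rev as"])
  moreover have "refl_word as (refl_word (rev as) x) = x" for x
    using refl_word_rev[of "rev as"] Phi by simp
  ultimately show ?thesis using that as refl_word_rev[OF Phi] by blast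
qed

lemma weyl_bij: "w \<in> weyl \<Longrightarrow> bij w"
  by (erule weyl_inverse) (metis bij_betw_byWitness top_greatest image_subsetI UNIV_I)

text \<open>Applying the suffixes of xs to a, the root turns negative at some
  letter xs ! j, which must be the image of a under the shorter suffix; conjugating, that letter
  cancels against refl a.\<close>
lemma refl_word_deletion:
  assumes xs: "set xs \<subseteq> Del" and a: "a \<in> Del" and neg: "pos_cone (- refl_word xs a)"
  obtains ys where "set ys \<subseteq> Del" "length ys < length xs" "refl_word xs \<circ> refl a = refl_word ys"
proof -
  have aP: "a \<in> Phi" using a simple_roots by blast
  have sub: "set (drop j xs) \<subseteq> Phi" for j using xs simple_roots set_drop_subset by fastforce
  define B where "B j = refl_word (drop j xs) a" for j
  have BP: "B j \<in> Phi" for j unfolding B_def using refl_word_root[OF sub aP] .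
  have "pos_cone (B (length xs))" unfolding B_def using pos_cone_simple[OF a] by simp
  moreover have "\<not> pos_cone (B 0)" using neg root_not_pos_cone_both[OF BP, of 0] by (auto simp: B_def)
  ultimately obtain j where j: "j < length xs" "\<not> pos_cone (B j)" "pos_cone (B (Suc j))"
    using ex_least_nat_less[of "\<lambda>j. pos_cone (B j)"] by blast
  have dj: "drop j xs = xs ! j # drop (Suc j) xs" using j(1) by (rule Cons_nth_drop_Suc[symmetric])
  have xj: "xs ! j \<in> Del" using j(1) xs nth_mem by blast
  have "B j = refl (xs ! j) (B (Suc j))" unfolding B_def by (simp add: dj)
  then have Bj: "refl_word (drop (Suc j) xs) a = xs ! j"
    using refl_simple_pos_root[OF xj BP j(3)] j(2) by (auto simp: B_def)
  have "refl_word xs (refl a x) = refl_word (take j xs @ drop (Suc j) xs) x" for x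
  proof -
    have "refl_word xs (refl a x)
        = refl_word (take j xs) (refl (xs ! j) (refl_word (drop (Suc j) xs) (refl a x)))"
      by (subst append_take_drop_id[symmetric, of xs j]) (simp add: refl_word_append dj)
    also have "refl (xs ! j) (refl_word (drop (Suc j) xs) (refl a x))
        = refl_word (drop (Suc j) xs) (refl a (refl a x))"
      unfolding Bj[symmetric] by (rule refl_word_conj[OF sub])
    finally show ?thesis using refl_refl[OF simple_nonzero[OF a]] by (simp add: refl_word_append)
  qed
  moreover have "set (take j xs @ drop (Suc j) xs) \<subseteq> Del"
    using xs set_take_subset[of j xs] set_drop_subset[of "Suc j" xs] by auto
  moreover have "length (take j xs @ drop (Suc j) xs) < length xs" using j(1) by simp
  ultimately show ?thesis using that by (metis comp_apply ext)
qed

lemma refl_word_fixes_dominant: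
  "set as \<subseteq> Del \<Longrightarrow> l \<in> fdom Del \<Longrightarrow> refl_word as l \<in> fdom Del \<Longrightarrow> refl_word as l = l"
proof (induction "length as" arbitrary: as rule: less_induct)
  case less
  show ?case
  proof (cases as rule: rev_exhaust)
    case Nil
    then show ?thesis by simp
  next
    case (snoc xs a)
    have xs: "set xs \<subseteq> Del" and a: "a \<in> Del" using less(2) snoc by auto
    have split: "refl_word as = refl_word xs \<circ> refl a" using snoc by (simp add: refl_word_append)
    have "refl_word xs a \<in> Phi" using refl_word_root xs a simple_roots by blast
    then consider "pos_cone (- refl_word xs a)" | "pos_cone (refl_word xs a)"
      using root_pos_cone_cases by blast
    then show ?thesis
    proof cases
      case 1
      then obtain ys where "set ys \<subseteq> Del" "length ys < length as" "refl_word as = refl_word ys"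
        using refl_word_deletion[OF xs a] split snoc by (metis length_append_singleton less_SucI)
      then show ?thesis using less by metis
    next
      case 2
      have "l \<bullet> a = refl_word as l \<bullet> refl_word as a"
        using refl_word_inner less(2) simple_roots by (metis order_trans)
      also have "refl_word as a = - refl_word xs a"
        using split refl_self[OF simple_nonzero[OF a]] linear_neg[OF refl_word_linear] by simp
      finally have "l \<bullet> a \<le> 0"
        using fdom_inner_pos_cone[OF less(4) 2] by simp
      moreover have "l \<bullet> a \<ge> 0" using less(3) a by (simp add: fdom_def)
      ultimately have "refl a l = l" by (simp add: refl_def)
      then have "refl_word as l = refl_word xs l" using split by simp
      moreover have "length xs < length as" using snoc by simp
      ultimately show ?thesis using less xs by metis
    qed
  qed
qed

lemma weyl_fixes_dominant: "w \<in> weyl \<Longrightarrow> l \<in> fdom Del \<Longrightarrow> w l \<in> fdom Del \<Longrightarrow> w l = l"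
  by (erule weyl_wordE) (simp add: refl_word_fixes_dominant)

end

section \<open>Rational convex hulls of orbits\<close>

lemma real_nat_floor_Ints: "x \<in> \<int> \<Longrightarrow> 0 \<le> x \<Longrightarrow> real (nat \<lfloor>x\<rfloor>) = x"
  by (auto elim!: Ints_cases)

lemma nat_comb_closed:
  fixes S :: "'a::real_vector set"
  assumes S: "S = {\<Sum>g\<in>G. of_nat (n g) *\<^sub>R g | n. True}"
  shows "0 \<in> S"
    and "x \<in> S \<Longrightarrow> y \<in> S \<Longrightarrow> x + y \<in> S"
    and "x \<in> S \<Longrightarrow> of_nat m *\<^sub>R x \<in> S"
proof -
  show "0 \<in> S" unfolding S by (intro CollectI exI[of _ "\<lambda>_. 0::nat"]) simp
  show "x \<in> S \<Longrightarrow> y \<in> S \<Longrightarrow> x + y \<in> S"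
  proof -
    assume "x \<in> S" "y \<in> S"
    then obtain n1 n2 where "x = (\<Sum>g\<in>G. of_nat (n1 g) *\<^sub>R g)" "y = (\<Sum>g\<in>G. of_nat (n2 g) *\<^sub>R g)"
      unfolding S by blast
    then show "x + y \<in> S"
      unfolding S by (intro CollectI exI[of _ "\<lambda>g. n1 g + n2 g"]) (simp add: scaleR_add_left sum.distrib)
  qed
  show "x \<in> S \<Longrightarrow> of_nat m *\<^sub>R x \<in> S"
  proof -
    assume "x \<in> S"
    then obtain n1 where "x = (\<Sum>g\<in>G. of_nat (n1 g) *\<^sub>R g)" unfolding S by blast
    then show "of_nat m *\<^sub>R x \<in> S"
      unfolding S by (intro CollectI exI[of _ "\<lambda>g. m * n1 g"]) (simp add: scaleR_sum_right)
  qed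
qed

lemma nat_comb_closed_sum:
  fixes S :: "'a::real_vector set"
  assumes S: "S = {\<Sum>g\<in>G. of_nat (n g) *\<^sub>R g | n. True}"
  shows "finite I \<Longrightarrow> \<forall>i\<in>I. p i \<in> S \<Longrightarrow> (\<Sum>i\<in>I. of_nat (m i) *\<^sub>R p i) \<in> S"
  by (induction I rule: finite_induct) (simp_all add: nat_comb_closed[OF S])

lemma int_comb_closed:
  fixes M :: "'a::real_vector set"
  assumes M: "M = {\<Sum>b\<in>B. of_int (c b) *\<^sub>R b | c. True}"
  shows int_comb_zero: "0 \<in> M"
    and int_comb_add: "x \<in> M \<Longrightarrow> y \<in> M \<Longrightarrow> x + y \<in> M"
    and int_comb_scale: "x \<in> M \<Longrightarrow> of_int k *\<^sub>R x \<in> M"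
proof -
  show "0 \<in> M" unfolding M by (intro CollectI exI[of _ "\<lambda>_. 0::int"]) simp
  show "x \<in> M \<Longrightarrow> y \<in> M \<Longrightarrow> x + y \<in> M"
  proof -
    assume "x \<in> M" "y \<in> M"
    then obtain n1 n2 where "x = (\<Sum>g\<in>B. of_int (n1 g) *\<^sub>R g)" "y = (\<Sum>g\<in>B. of_int (n2 g) *\<^sub>R g)"
      unfolding M by blast
    then show "x + y \<in> M"
      unfolding M by (intro CollectI exI[of _ "\<lambda>g. n1 g + n2 g"]) (simp add: scaleR_add_left sum.distrib)
  qed
  show "x \<in> M \<Longrightarrow> of_int k *\<^sub>R x \<in> M"
  proof -
    assume "x \<in> M"
    then obtain n1 where "x = (\<Sum>g\<in>B. of_int (n1 g) *\<^sub>R g)" unfolding M by blast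
    then show "of_int k *\<^sub>R x \<in> M"
      unfolding M by (intro CollectI exI[of _ "\<lambda>g. k * n1 g"]) (simp add: scaleR_sum_right)
  qed
qed

lemma int_comb_diff:
  fixes M :: "'a::real_vector set"
  assumes M: "M = {\<Sum>b\<in>B. of_int (c b) *\<^sub>R b | c. True}"
  shows "x \<in> M \<Longrightarrow> y \<in> M \<Longrightarrow> x - y \<in> M"
  using int_comb_add[OF M, of x "of_int (-1) *\<^sub>R y"] int_comb_scale[OF M, of y "-1"] by simp

lemma int_comb_closed_sum:
  fixes M :: "'a::real_vector set"
  assumes M: "M = {\<Sum>b\<in>B. of_int (c b) *\<^sub>R b | c. True}"
  shows "finite I \<Longrightarrow> \<forall>i\<in>I. p i \<in> M \<Longrightarrow> (\<Sum>i\<in>I. of_int (m i) *\<^sub>R p i) \<in> M"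
  by (induction I rule: finite_induct) (simp_all add: int_comb_closed[OF M])

definition rat_orbit_hull :: "('a \<Rightarrow> 'a::real_vector) set \<Rightarrow> 'a \<Rightarrow> 'a set" where
  "rat_orbit_hull W nu =
     {\<Sum>w\<in>W. t w *\<^sub>R w nu | t. (\<forall>w\<in>W. t w \<in> \<rat> \<and> 0 \<le> t w) \<and> sum t W = 1}"

lemma add_convex_sum:
  fixes p :: "'i \<Rightarrow> 'a::real_vector"
  assumes "sum t I = 1"
  shows "y + (\<Sum>i\<in>I. t i *\<^sub>R p i) = (\<Sum>i\<in>I. t i *\<^sub>R (y + p i))"
proof -
  have "(\<Sum>i\<in>I. t i *\<^sub>R (y + p i)) = (\<Sum>i\<in>I. t i *\<^sub>R y) + (\<Sum>i\<in>I. t i *\<^sub>R p i)"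
    by (simp add: scaleR_add_right sum.distrib)
  also have "(\<Sum>i\<in>I. t i *\<^sub>R y) = y" using assms by (simp add: scaleR_sum_left[symmetric])
  finally show ?thesis by simp
qed

lemma rat_orbit_hull_orbit:
  assumes "finite W" "v \<in> W"
  shows "v nu \<in> rat_orbit_hull W nu"
proof -
  let ?t = "\<lambda>w. if w = v then 1 else 0 :: real"
  have "(\<Sum>w\<in>W. ?t w *\<^sub>R w nu) = v nu" "sum ?t W = 1"
    using assms by (simp_all add: if_distrib[of "\<lambda>c. c *\<^sub>R _"] sum.delta cong: if_cong)
  then show ?thesis unfolding rat_orbit_hull_def by (intro CollectI exI[of _ ?t]) auto
qed

lemma rat_orbit_hull_convex_sum:
  assumes "finite I" "\<forall>i\<in>I. c i \<in> \<rat> \<and> 0 \<le> c i" "sum c I = 1"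
    and "\<forall>i\<in>I. p i \<in> rat_orbit_hull W nu"
  shows "(\<Sum>i\<in>I. c i *\<^sub>R p i) \<in> rat_orbit_hull W nu"
proof -
  obtain T where T: "\<forall>i\<in>I. p i = (\<Sum>w\<in>W. T i w *\<^sub>R w nu) \<and>
      (\<forall>w\<in>W. T i w \<in> \<rat> \<and> 0 \<le> T i w) \<and> sum (T i) W = 1"
    using bchoice[OF assms(4)[unfolded rat_orbit_hull_def, simplified]] by blast
  define t where "t w = (\<Sum>i\<in>I. c i * T i w)" for w
  have "(\<Sum>i\<in>I. c i *\<^sub>R p i) = (\<Sum>i\<in>I. \<Sum>w\<in>W. (c i * T i w) *\<^sub>R w nu)"
    using T by (intro sum.cong) (auto simp: scaleR_sum_right)
  also have "\<dots> = (\<Sum>w\<in>W. t w *\<^sub>R w nu)"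
    unfolding t_def by (subst sum.swap) (simp add: scaleR_sum_left)
  finally have "(\<Sum>i\<in>I. c i *\<^sub>R p i) = (\<Sum>w\<in>W. t w *\<^sub>R w nu)" .
  moreover have "\<forall>w\<in>W. t w \<in> \<rat> \<and> 0 \<le> t w"
    using assms(2) T unfolding t_def by (auto intro!: Rats_sum Rats_mult sum_nonneg)
  moreover have "sum t W = (\<Sum>i\<in>I. c i * sum (T i) W)"
    unfolding t_def by (subst sum.swap) (simp add: sum_distrib_left)
  then have "sum t W = 1" using T assms(3) by simp
  ultimately show ?thesis unfolding rat_orbit_hull_def by blast
qed

lemma rat_orbit_hull_segment:
  assumes "p \<in> rat_orbit_hull W nu" "q \<in> rat_orbit_hull W nu" "th \<in> \<rat>" "0 \<le> th" "th \<le> 1"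
  shows "(1 - th) *\<^sub>R p + th *\<^sub>R q \<in> rat_orbit_hull W nu"
proof -
  let ?c = "\<lambda>i::bool. if i then th else 1 - th"
  let ?p = "\<lambda>i::bool. if i then q else p"
  have "(\<Sum>i\<in>UNIV. ?c i *\<^sub>R ?p i) \<in> rat_orbit_hull W nu"
    using assms by (intro rat_orbit_hull_convex_sum) (auto simp: UNIV_bool)
  then show ?thesis by (simp add: UNIV_bool)
qed

lemma Rats_common_denominator:
  assumes "finite I" "\<forall>i\<in>I. t i \<in> \<rat>"
  obtains k :: nat where "k > 0" "\<forall>i\<in>I. real k * t i \<in> \<int>"
  using assms
proof (induction I arbitrary: thesis rule: finite_induct)
  case empty
  then show ?case by (metis empty_iff zero_less_one)
next
  case (insert i I)
  then obtain k :: nat where k: "k > 0" "\<forall>j\<in>I. real k * t j \<in> \<int>" by auto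
  obtain p q where pq: "q > 0" "t i = of_int p / of_int q"
    using insert(5) Rats_cases' by (metis insert_iff)
  have "real (k * nat q) * t j \<in> \<int>" if "j \<in> insert i I" for j
  proof (cases "j = i")
    case True
    then show ?thesis using pq by simp
  next
    case False
    then have "of_int q * (real k * t j) \<in> \<int>" using k that by (simp add: Ints_mult)
    then show ?thesis using pq(1) by (simp add: mult_ac)
  qed
  then show ?case using insert(4)[of "k * nat q"] k(1) pq(1) by simp
qed

lemma saturated_rat_orbit_hull:
  assumes "saturated_affine_semigroup M S" "finite W" "\<forall>w\<in>W. w u \<in> S"
    and "v \<in> M" "v \<in> rat_orbit_hull W u"
  shows "v \<in> S"
proof -
  obtain G where S: "S = {\<Sum>g\<in>G. of_nat (n g) *\<^sub>R g | n. True}"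
    and sat: "\<forall>k::nat. \<forall>m\<in>M. k > 0 \<longrightarrow> of_nat k *\<^sub>R m \<in> S \<longrightarrow> m \<in> S"
    using assms(1) unfolding saturated_affine_semigroup_def by blast
  obtain t where t: "v = (\<Sum>w\<in>W. t w *\<^sub>R w u)" "\<forall>w\<in>W. t w \<in> \<rat> \<and> 0 \<le> t w"
    using assms(5) unfolding rat_orbit_hull_def by blast
  obtain k :: nat where k: "k > 0" "\<forall>w\<in>W. real k * t w \<in> \<int>"
    using Rats_common_denominator[OF assms(2), of t] t(2) by blast
  have "of_nat k *\<^sub>R v = (\<Sum>w\<in>W. of_nat (nat \<lfloor>real k * t w\<rfloor>) *\<^sub>R w u)"
    unfolding t(1) scaleR_sum_right using k(2) t(2) by (intro sum.cong) (simp_all add: real_nat_floor_Ints)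
  also have "\<dots> \<in> S"
    using assms(2,3) by (rule nat_comb_closed_sum[OF S])
  finally show ?thesis using sat k(1) assms(4) by blast
qed

section \<open>Crystallographic systems\<close>

locale crystallographic_system = simple_root_system +
  assumes finite_weyl: "finite weyl"
    and cpair_simple_Ints: "\<And>a b. a \<in> Del \<Longrightarrow> b \<in> Del \<Longrightarrow> cpair a b \<in> \<int>"
begin

lemma orbit_meets_fdom: obtains w where "w \<in> weyl" "w x \<in> fdom Del"
proof -
  define heights where "heights = (\<lambda>w. w x \<bullet> rho) ` weyl"
  have "finite heights" "heights \<noteq> {}" using finite_weyl weyl_id by (auto simp: heights_def)
  then have "Max heights \<in> heights" by (rule Max_in)
  then obtain w where w: "w \<in> weyl" "w x \<bullet> rho = Max heights" unfolding heights_def by auto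
  have "w x \<in> fdom Del"
  proof (rule ccontr)
    assume "w x \<notin> fdom Del"
    then obtain a where a: "a \<in> Del" "w x \<bullet> a < 0" by (auto simp: fdom_def not_le)
    then have "refl a \<circ> w \<in> weyl" using weyl_comp[OF weyl_refl w(1)] simple_roots by blast
    then have "(refl a \<circ> w) x \<bullet> rho \<in> heights" unfolding heights_def by (rule imageI)
    then have "refl a (w x) \<bullet> rho \<le> Max heights" using \<open>finite heights\<close> by simp
    moreover have "cpair (w x) a < 0" using a simple_inner_pos[OF a(1)] by (simp add: cpair_def divide_neg_pos)
    ultimately show False using w(2) inner_refl_simple_rho[OF a(1)] by simp
  qed
  then show ?thesis using that w(1) by blast
qed

lemma refl_simple_weights: "x \<in> weights Del \<Longrightarrow> a \<in> Del \<Longrightarrow> refl a x \<in> weights Del"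
  unfolding weights_def using cpair_simple_Ints by (auto simp: cpair_refl intro!: Ints_diff Ints_mult)

lemma weyl_weights: "w \<in> weyl \<Longrightarrow> x \<in> weights Del \<Longrightarrow> w x \<in> weights Del"
proof (erule weyl_wordE)
  fix as assume "set as \<subseteq> Del" "w = refl_word as" "x \<in> weights Del"
  then show "w x \<in> weights Del" by (induction as arbitrary: w) (auto simp: refl_simple_weights)
qed

lemma weyl_fixes_Zsp: "w \<in> weyl \<Longrightarrow> z \<in> Zsp Del \<Longrightarrow> w z = z"
proof (erule weyl_wordE)
  fix as assume "set as \<subseteq> Del" "w = refl_word as" "z \<in> Zsp Del"
  then show "w z = z" by (induction as arbitrary: w) (auto simp: Zsp_def refl_def)
qed

definition root_lattice :: "'a set" where
  "root_lattice = {\<Sum>a\<in>Del. of_int (c a) *\<^sub>R a | c. True}"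

lemma root_lattice_add: "x \<in> root_lattice \<Longrightarrow> y \<in> root_lattice \<Longrightarrow> x + y \<in> root_lattice"
  by (rule int_comb_add[OF root_lattice_def])

lemma root_lattice_zero: "0 \<in> root_lattice"
  by (rule int_comb_zero[OF root_lattice_def])

lemma root_lattice_simple: "a \<in> Del \<Longrightarrow> k \<in> \<int> \<Longrightarrow> k *\<^sub>R a \<in> root_lattice"
proof -
  assume a: "a \<in> Del" "k \<in> \<int>"
  then obtain n where n: "k = of_int n" by (auto elim: Ints_cases)
  have "(\<Sum>b\<in>Del. of_int (if b = a then n else 0) *\<^sub>R b) = (\<Sum>b\<in>Del. (if b = a then k else 0) *\<^sub>R b)"
    by (rule sum.cong) (auto simp: n)
  then have "k *\<^sub>R a = (\<Sum>b\<in>Del. of_int (if b = a then n else 0) *\<^sub>R b)"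
    using sum_simple_delta[OF a(1)] by simp
  then show ?thesis unfolding root_lattice_def by (intro CollectI exI[of _ "\<lambda>b. if b = a then n else 0"]) simp
qed

lemma root_lattice_subset: "root_lattice \<subseteq> M"
  if "M = {\<Sum>b\<in>B. of_int (c b) *\<^sub>R b | c. True}" "Del \<subseteq> M" for M B
proof
  fix x assume "x \<in> root_lattice"
  then obtain c where "x = (\<Sum>a\<in>Del. of_int (c a) *\<^sub>R a)" unfolding root_lattice_def by blast
  then show "x \<in> M" using int_comb_closed_sum[OF that(1) finite_simple, of "\<lambda>a. a" c] that(2) by auto
qed

lemma root_lattice_weights: "root_lattice \<subseteq> weights Del"
proof
  fix x assume "x \<in> root_lattice"
  then obtain c where "x = (\<Sum>a\<in>Del. of_int (c a) *\<^sub>R a)" unfolding root_lattice_def by blast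
  then show "x \<in> weights Del"
    by (simp add: weights_def cpair_sum cpair_scale cpair_simple_Ints Ints_sum)
qed

lemma weight_minus_weyl: "w \<in> weyl \<Longrightarrow> x \<in> weights Del \<Longrightarrow> x - w x \<in> root_lattice"
proof (erule weyl_wordE)
  fix as assume "set as \<subseteq> Del" "w = refl_word as" "x \<in> weights Del"
  then show "x - w x \<in> root_lattice"
  proof (induction as arbitrary: w)
    case Nil
    then show ?case by (simp add: root_lattice_zero)
  next
    case (Cons a as)
    have "refl_word as x \<in> weights Del"
      using weyl_weights Cons(2,4) by (auto simp: weyl_iff_word)
    then have "cpair (refl_word as x) a \<in> \<int>" using Cons(2) by (simp add: weights_def)
    then have "refl_word as x - refl a (refl_word as x) \<in> root_lattice"
      using root_lattice_simple Cons(2) by (simp add: refl_eq_cpair)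
    then have "(x - refl_word as x) + (refl_word as x - refl a (refl_word as x)) \<in> root_lattice"
      using Cons by (intro root_lattice_add) auto
    then show ?case using Cons(3) by simp
  qed
qed

abbreviation orbit_hull :: "'a \<Rightarrow> 'a set" where
  "orbit_hull \<equiv> rat_orbit_hull weyl"

lemma orbit_hull_weyl: assumes "v \<in> weyl" "x \<in> orbit_hull nu" shows "v x \<in> orbit_hull nu"
proof -
  obtain t where t: "x = (\<Sum>w\<in>weyl. t w *\<^sub>R w nu)" "\<forall>w\<in>weyl. t w \<in> \<rat> \<and> 0 \<le> t w" "sum t weyl = 1"
    using assms(2) unfolding rat_orbit_hull_def by blast
  have "v x = (\<Sum>w\<in>weyl. t w *\<^sub>R (v \<circ> w) nu)"
    using weyl_linear[OF assms(1)] unfolding t(1) by (simp add: linear_sum linear_scale)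
  also have "\<dots> \<in> orbit_hull nu"
    using t finite_weyl weyl_comp[OF assms(1)]
    by (intro rat_orbit_hull_convex_sum ballI rat_orbit_hull_orbit) (auto simp del: o_apply)
  finally show ?thesis .
qed

lemma orbit_hull_Zsp_shift:
  assumes "z \<in> Zsp Del" "x \<in> orbit_hull nu"
  shows "z + x \<in> orbit_hull (z + nu)"
proof -
  obtain t where t: "x = (\<Sum>w\<in>weyl. t w *\<^sub>R w nu)" "\<forall>w\<in>weyl. t w \<in> \<rat> \<and> 0 \<le> t w" "sum t weyl = 1"
    using assms(2) unfolding rat_orbit_hull_def by blast
  have "z + x = (\<Sum>w\<in>weyl. t w *\<^sub>R (z + w nu))" unfolding t(1) by (rule add_convex_sum[OF t(3)])
  also have "\<dots> = (\<Sum>w\<in>weyl. t w *\<^sub>R w (z + nu))"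
    by (intro sum.cong refl) (simp add: linear_add[OF weyl_linear] weyl_fixes_Zsp[OF _ assms(1)])
  finally show ?thesis unfolding rat_orbit_hull_def using t by blast
qed

text \<open>The segment from x to its mirror image refl a x lies in the hull.\<close>
lemma orbit_hull_root_string:
  assumes x: "x \<in> orbit_hull nu" and a: "a \<in> Phi"
    and c: "cpair x a \<in> \<rat>" "c \<in> \<rat>" "0 \<le> c" "c \<le> cpair x a"
  shows "x - c *\<^sub>R a \<in> orbit_hull nu"
proof -
  define th where "th = c / cpair x a"
  have th: "th \<in> \<rat>" "0 \<le> th" "th \<le> 1" using c by (auto simp: th_def divide_le_eq_1)
  have "th * cpair x a = c" using c by (auto simp: th_def)
  then have "x - c *\<^sub>R a = (1 - th) *\<^sub>R x + th *\<^sub>R refl a x"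
    by (simp add: refl_eq_cpair algebra_simps)
  also have "\<dots> \<in> orbit_hull nu"
    using rat_orbit_hull_segment[OF x orbit_hull_weyl[OF weyl_refl[OF a] x] th] .
  finally show ?thesis .
qed

abbreviation dominant_weights :: "'a set" where
  "dominant_weights \<equiv> fdom Del \<inter> weights Del"

lemma card_higher_orbit_refl_less:
  assumes v: "v \<in> weyl" and a: "a \<in> Del" and neg: "cpair (v mu) a < 0"
  shows "card {y \<in> (\<lambda>w. w mu) ` weyl. refl a (v mu) \<bullet> rho < y \<bullet> rho}
       < card {y \<in> (\<lambda>w. w mu) ` weyl. v mu \<bullet> rho < y \<bullet> rho}"
proof (rule psubset_card_mono)
  have "(refl a \<circ> v) mu \<in> (\<lambda>w. w mu) ` weyl"
    using weyl_comp[OF weyl_refl v] a simple_roots by blast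
  moreover have "v mu \<bullet> rho < refl a (v mu) \<bullet> rho" using neg by (simp add: inner_refl_simple_rho[OF a])
  ultimately show "{y \<in> (\<lambda>w. w mu) ` weyl. refl a (v mu) \<bullet> rho < y \<bullet> rho}
      \<subset> {y \<in> (\<lambda>w. w mu) ` weyl. v mu \<bullet> rho < y \<bullet> rho}"
    by auto
qed (simp add: finite_weyl)

text \<open>Induction on the number of orbit points of mu higher than v mu: if v mu is not dominant,
  reflecting it in a simple root a with negative pairing moves it up, and l + v mu lies on the
  segment between l + refl a (v mu) and its mirror image in a.\<close>
lemma dominant_add_orbit_in_hull:
  assumes l: "l \<in> dominant_weights" and mu: "mu \<in> dominant_weights" and v: "v \<in> weyl"
  shows "l + v mu \<in> orbit_hull (l + mu)"
  using v
proof (induction "card {y \<in> (\<lambda>w. w mu) ` weyl. v mu \<bullet> rho < y \<bullet> rho}" arbitrary: v rule: less_induct)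
  case less
  show ?case
  proof (cases "v mu \<in> fdom Del")
    case True
    then have "v mu = mu" using weyl_fixes_dominant less(2) mu by auto
    then show ?thesis using rat_orbit_hull_orbit[OF finite_weyl weyl_id, of "l + mu"] by simp
  next
    case False
    then obtain a where a: "a \<in> Del" "v mu \<bullet> a < 0" by (auto simp: fdom_def not_le)
    have aP: "a \<in> Phi" using a simple_roots by blast
    define v' where "v' = refl a \<circ> v"
    have v': "v' \<in> weyl" using weyl_comp[OF weyl_refl[OF aP] less(2)] v'_def by simp
    have neg: "cpair (v mu) a < 0" using a simple_inner_pos[OF a(1)] by (simp add: cpair_def divide_neg_pos)
    then have c: "0 < cpair (v' mu) a" by (simp add: v'_def cpair_refl_self[OF simple_nonzero[OF a(1)]])
    from less(1)[OF _ v'] card_higher_orbit_refl_less[OF less(2) a(1) neg]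
    have IH: "l + v' mu \<in> orbit_hull (l + mu)" by (simp add: v'_def)
    have Ints: "cpair l a \<in> \<int>" "cpair (v' mu) a \<in> \<int>"
      using l weyl_weights[OF v'] mu a(1) by (auto simp: weights_def)
    then have Rats: "cpair (l + v' mu) a \<in> \<rat>" "cpair (v' mu) a \<in> \<rat>"
      by (auto simp: cpair_add intro: Ints_subset_Rats[THEN subsetD])
    have "0 \<le> cpair l a" using l a(1) simple_inner_pos[OF a(1)] by (simp add: fdom_def cpair_def)
    then have "cpair (v' mu) a \<le> cpair (l + v' mu) a" by (simp add: cpair_add)
    then have "l + v' mu - cpair (v' mu) a *\<^sub>R a \<in> orbit_hull (l + mu)"
      using c by (intro orbit_hull_root_string[OF IH aP Rats]) auto
    moreover have "l + v' mu - cpair (v' mu) a *\<^sub>R a = l + refl a (v' mu)"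
      by (simp add: refl_eq_cpair)
    ultimately show ?thesis
      using refl_refl[OF simple_nonzero[OF a(1)]] by (simp add: v'_def flip: add_diff_eq)
  qed
qed

lemma orbit_hull_add:
  assumes l: "l \<in> dominant_weights" and mu: "mu \<in> dominant_weights"
    and x: "x \<in> orbit_hull l" and y: "y \<in> orbit_hull mu"
  shows "x + y \<in> orbit_hull (l + mu)"
proof -
  obtain s where s: "x = (\<Sum>w\<in>weyl. s w *\<^sub>R w l)" "\<forall>w\<in>weyl. s w \<in> \<rat> \<and> 0 \<le> s w" "sum s weyl = 1"
    using x unfolding rat_orbit_hull_def by blast
  obtain t where t: "y = (\<Sum>w\<in>weyl. t w *\<^sub>R w mu)" "\<forall>w\<in>weyl. t w \<in> \<rat> \<and> 0 \<le> t w" "sum t weyl = 1"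
    using y unfolding rat_orbit_hull_def by blast
  have orbit_add_y: "w l + y \<in> orbit_hull (l + mu)" if w: "w \<in> weyl" for w
  proof -
    obtain w' where w': "w' \<in> weyl" "\<And>x. w' (w x) = x" "\<And>x. w (w' x) = x"
      using weyl_inverse[OF w] by blast
    have "w l + v mu \<in> orbit_hull (l + mu)" if v: "v \<in> weyl" for v
    proof -
      have "w (l + (w' \<circ> v) mu) \<in> orbit_hull (l + mu)"
        by (rule orbit_hull_weyl[OF w dominant_add_orbit_in_hull[OF l mu weyl_comp[OF w'(1) v]]])
      then show ?thesis using linear_add[OF weyl_linear[OF w]] w'(3) by simp
    qed
    moreover have "w l + y = (\<Sum>v\<in>weyl. t v *\<^sub>R (w l + v mu))"
      unfolding t(1) by (rule add_convex_sum[OF t(3)])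
    ultimately show ?thesis
      using finite_weyl t(2,3) by (simp add: rat_orbit_hull_convex_sum)
  qed
  have "x + y = (\<Sum>w\<in>weyl. s w *\<^sub>R (w l + y))"
    unfolding s(1) using add_convex_sum[OF s(3), of y] by (simp add: add.commute)
  also have "\<dots> \<in> orbit_hull (l + mu)"
    using finite_weyl s(2,3) orbit_add_y by (intro rat_orbit_hull_convex_sum) auto
  finally show ?thesis .
qed

section \<open>The support of Psi\<close>

lemma cpair_fund_weight:
  assumes a: "a \<in> Del" and b: "b \<in> Del"
  shows "cpair (fund_weight Del a) b = (if b = a then 1 else 0)"
proof -
  let ?P = "\<lambda>l. l \<in> span Del \<and> (\<forall>b\<in>Del. cpair l b = (if b = a then 1 else 0))"
  obtain l where l: "l \<in> span Del" "\<forall>b\<in>Del. l \<bullet> b = (if b = a then (b \<bullet> b) / 2 else 0)"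
    using exists_span_inner_eq[OF independent_simple, of "\<lambda>b. if b = a then (b \<bullet> b) / 2 else 0"]
    by blast
  have "cpair l b = (if b = a then 1 else 0)" if "b \<in> Del" for b
    using l(2) that simple_inner_pos[OF that] by (simp add: cpair_def)
  then have "?P l" using l(1) by blast
  moreover have "m = l" if m: "?P m" for m
  proof -
    have "(m - l) \<bullet> b = 0" if b: "b \<in> Del" for b
    proof -
      have "cpair m b = cpair l b" using m \<open>?P l\<close> b by simp
      then show ?thesis using simple_inner_pos[OF b] by (simp add: cpair_def inner_diff_left)
    qed
    moreover have "m - l \<in> span Del" using m l(1) by (simp add: span_diff)
    ultimately have "orthogonal (m - l) (m - l)"
      by (intro orthogonal_to_span[of "m - l" Del]) (auto simp: orthogonal_def)
    then show "m = l" by (simp add: orthogonal_def)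
  qed
  ultimately have "?P (fund_weight Del a)" unfolding fund_weight_def by (rule theI)
  then show ?thesis using b by blast
qed

lemma fund_weight_dominant:
  assumes a: "a \<in> Del" shows "fund_weight Del a \<in> dominant_weights"
proof -
  have "0 \<le> fund_weight Del a \<bullet> b" if "b \<in> Del" for b
  proof -
    have "0 \<le> cpair (fund_weight Del a) b" using cpair_fund_weight[OF a that] by simp
    then show ?thesis using cpair_nonneg_iff[OF simple_nonzero[OF that]] by simp
  qed
  then show ?thesis using a by (auto simp: fdom_def weights_def cpair_fund_weight)
qed

lemma dominant_weights_add: "x \<in> dominant_weights \<Longrightarrow> y \<in> dominant_weights \<Longrightarrow> x + y \<in> dominant_weights"
  by (auto simp: fdom_def weights_def inner_add_left cpair_add)

lemma dominant_weights_scale: "x \<in> dominant_weights \<Longrightarrow> real n *\<^sub>R x \<in> dominant_weights"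
  by (auto simp: fdom_def weights_def cpair_scale)

lemma dominant_weights_sum:
  "\<forall>a\<in>A. f a \<in> dominant_weights \<Longrightarrow> sum f A \<in> dominant_weights"
proof (induction A rule: infinite_finite_induct)
  case (insert x F)
  then show ?case using dominant_weights_add[of "f x" "sum f F"] by simp
qed (auto simp: fdom_def weights_def cpair_def)

definition orbit_hull_coset :: "'a \<Rightarrow> 'a set" where
  "orbit_hull_coset nu = {x \<in> orbit_hull nu. nu - x \<in> root_lattice}"

lemma keys_mult_orbit_hull_coset:
  assumes "l \<in> dominant_weights" "mu \<in> dominant_weights"
    and "Poly_Mapping.keys p \<subseteq> orbit_hull_coset l" "Poly_Mapping.keys q \<subseteq> orbit_hull_coset mu"
  shows "Poly_Mapping.keys (p * q) \<subseteq> orbit_hull_coset (l + mu)"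
proof
  fix x assume "x \<in> Poly_Mapping.keys (p * q)"
  then obtain y z where yz: "x = y + z" "y \<in> Poly_Mapping.keys p" "z \<in> Poly_Mapping.keys q" using keys_mult by blast
  then have y: "y \<in> orbit_hull l" "l - y \<in> root_lattice"
    and z: "z \<in> orbit_hull mu" "mu - z \<in> root_lattice"
    using assms(3,4) by (auto simp: orbit_hull_coset_def)
  have "x \<in> orbit_hull (l + mu)" using orbit_hull_add[OF assms(1,2) y(1) z(1)] yz(1) by simp
  moreover have "(l + mu) - x = (l - y) + (mu - z)" using yz(1) by simp
  then have "(l + mu) - x \<in> root_lattice" using root_lattice_add[OF y(2) z(2)] by (simp only:)
  ultimately show "x \<in> orbit_hull_coset (l + mu)" by (simp add: orbit_hull_coset_def)
qed

lemma keys_one_orbit_hull_coset: "Poly_Mapping.keys (1 :: 'a \<Rightarrow>\<^sub>0 int) \<subseteq> orbit_hull_coset 0"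
  using rat_orbit_hull_orbit[OF finite_weyl weyl_id, of 0] root_lattice_zero
  by (simp add: orbit_hull_coset_def)

lemma keys_power_orbit_hull_coset:
  assumes "l \<in> dominant_weights" "Poly_Mapping.keys p \<subseteq> orbit_hull_coset l"
  shows "Poly_Mapping.keys ((p :: 'a \<Rightarrow>\<^sub>0 int) ^ n) \<subseteq> orbit_hull_coset (real n *\<^sub>R l)"
proof (induction n)
  case 0
  then show ?case using keys_one_orbit_hull_coset by simp
next
  case (Suc n)
  have "Poly_Mapping.keys (p * p ^ n) \<subseteq> orbit_hull_coset (l + real n *\<^sub>R l)"
    using Suc assms by (intro keys_mult_orbit_hull_coset dominant_weights_scale)
  then show ?case by (simp add: algebra_simps)
qed

lemma keys_orbsum_orbit_hull_coset:
  assumes "l \<in> weights Del"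
  shows "Poly_Mapping.keys (orbsum weyl l) \<subseteq> orbit_hull_coset l"
proof
  fix x assume "x \<in> Poly_Mapping.keys (orbsum weyl l)"
  then obtain w where "w \<in> weyl" "x = w l"
    unfolding orbsum_def chi_def using keys_sum by fastforce
  then show "x \<in> orbit_hull_coset l"
    using rat_orbit_hull_orbit[OF finite_weyl] weight_minus_weyl assms
    by (simp add: orbit_hull_coset_def)
qed

lemma keys_fund_weight_prod_orbit_hull_coset:
  "A \<subseteq> Del \<Longrightarrow> Poly_Mapping.keys (\<Prod>a\<in>A. orbsum weyl (fund_weight Del a) ^ n a)
     \<subseteq> orbit_hull_coset (\<Sum>a\<in>A. real (n a) *\<^sub>R fund_weight Del a)"
proof (induction A rule: infinite_finite_induct)
  case (infinite A)
  then show ?case using finite_simple finite_subset by blast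
next
  case empty
  then show ?case using keys_one_orbit_hull_coset by simp
next
  case (insert a A)
  have dom: "fund_weight Del a \<in> dominant_weights" using insert(4) by (intro fund_weight_dominant) simp
  have "(\<Sum>a\<in>A. real (n a) *\<^sub>R fund_weight Del a) \<in> dominant_weights"
    using insert(4) fund_weight_dominant by (intro dominant_weights_sum ballI dominant_weights_scale) auto
  from keys_mult_orbit_hull_coset[OF dominant_weights_scale[OF dom] this
      keys_power_orbit_hull_coset[OF dom keys_orbsum_orbit_hull_coset] insert.IH]
  show ?case using insert dom by simp
qed

lemma Psi_Zsp_part:
  assumes u: "u \<in> dominant_weights"
  shows "u - (\<Sum>a\<in>Del. real (nat \<lfloor>cpair u a\<rfloor>) *\<^sub>R fund_weight Del a) \<in> Zsp Del"
proof -
  have "cpair (u - (\<Sum>a\<in>Del. real (nat \<lfloor>cpair u a\<rfloor>) *\<^sub>R fund_weight Del a)) b = 0"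
    if b: "b \<in> Del" for b
  proof -
    have "(\<Sum>a\<in>Del. real (nat \<lfloor>cpair u a\<rfloor>) * cpair (fund_weight Del a) b)
        = (\<Sum>a\<in>Del. if a = b then real (nat \<lfloor>cpair u b\<rfloor>) else 0)"
      using b by (intro sum.cong) (auto simp: cpair_fund_weight)
    also have "\<dots> = cpair u b"
      using b finite_simple u cpair_nonneg_iff[OF simple_nonzero[OF b]]
      by (simp add: real_nat_floor_Ints weights_def fdom_def)
    finally show ?thesis by (simp add: cpair_diff cpair_sum cpair_scale)
  qed
  then show ?thesis using simple_inner_pos by (fastforce simp: Zsp_def cpair_def)
qed

lemma keys_Psi:
  assumes u: "u \<in> dominant_weights"
  shows "Poly_Mapping.keys (Psi weyl Del u) \<subseteq> orbit_hull_coset u"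
proof
  define nu where "nu = (\<Sum>a\<in>Del. real (nat \<lfloor>cpair u a\<rfloor>) *\<^sub>R fund_weight Del a)"
  define Q where "Q = (\<Prod>a\<in>Del. orbsum weyl (fund_weight Del a) ^ nat \<lfloor>cpair u a\<rfloor>)"
  have z: "u - nu \<in> Zsp Del" using Psi_Zsp_part[OF u] by (simp add: nu_def)
  have Q: "Poly_Mapping.keys Q \<subseteq> orbit_hull_coset nu"
    unfolding Q_def nu_def by (rule keys_fund_weight_prod_orbit_hull_coset[OF subset_refl])
  fix x assume "x \<in> Poly_Mapping.keys (Psi weyl Del u)"
  then obtain y where y: "x = (u - nu) + y" "y \<in> Poly_Mapping.keys Q"
    using keys_mult[of "chi (u - nu)" Q] by (auto simp: Psi_def Let_def nu_def Q_def chi_def)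
  then have "y \<in> orbit_hull nu" "nu - y \<in> root_lattice" using Q by (auto simp: orbit_hull_coset_def)
  moreover have "u - x = nu - y" using y(1) by simp
  ultimately show "x \<in> orbit_hull_coset u"
    using orbit_hull_Zsp_shift[OF z, of y nu] y(1) by (simp add: orbit_hull_coset_def)
qed

end

section \<open>Orbit sums\<close>

lemma lookup_of_int_mult:
  "Poly_Mapping.lookup (of_int k * (p :: 'a::monoid_add \<Rightarrow>\<^sub>0 int)) y = k * Poly_Mapping.lookup p y"
proof -
  have "of_int k * p = Poly_Mapping.map ((*) k) p"
    by (simp add: mult_map_scale_conv_mult single_of_int[symmetric] del: single_of_int)
  then show ?thesis by (simp add: Poly_Mapping.map.rep_eq when_def)
qed

context crystallographic_system
begin

definition weyl_invariant :: "('a \<Rightarrow>\<^sub>0 int) \<Rightarrow> bool" where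
  "weyl_invariant p \<longleftrightarrow> (\<forall>w\<in>weyl. \<forall>x. Poly_Mapping.lookup p (w x) = Poly_Mapping.lookup p x)"

lemma weyl_inj_eq: "w \<in> weyl \<Longrightarrow> w x = w y \<longleftrightarrow> x = y"
  using weyl_bij bij_is_inj inj_eq by metis

lemma weyl_invariant_mult:
  assumes p: "weyl_invariant p" and q: "weyl_invariant q"
  shows "weyl_invariant (p * q)"
  unfolding weyl_invariant_def
proof (intro ballI allI)
  fix w x assume w: "w \<in> weyl"
  have b: "bij w" using weyl_bij[OF w] .
  have inner: "(\<Sum>r. Poly_Mapping.lookup q r when w x = w l + r)
      = (\<Sum>r. Poly_Mapping.lookup q r when x = l + r)" for l
  proof -
    have "(\<Sum>r. Poly_Mapping.lookup q r when w x = w l + r)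
        = (\<Sum>r. Poly_Mapping.lookup q (w r) when w x = w l + w r)"
      by (rule Sum_any.reindex_cong[OF b]) (simp add: fun_eq_iff)
    also have "\<dots> = (\<Sum>r. Poly_Mapping.lookup q r when x = l + r)"
    proof (rule Sum_any.cong)
      fix r
      have "w x = w l + w r \<longleftrightarrow> x = l + r"
        using linear_add[OF weyl_linear[OF w], of l r] weyl_inj_eq[OF w, of x "l + r"] by simp
      then show "(Poly_Mapping.lookup q (w r) when w x = w l + w r)
          = (Poly_Mapping.lookup q r when x = l + r)"
        using q w unfolding weyl_invariant_def by simp
    qed
    finally show ?thesis .
  qed
  have "Poly_Mapping.lookup (p * q) (w x)
      = (\<Sum>l. Poly_Mapping.lookup p l * (\<Sum>r. Poly_Mapping.lookup q r when w x = l + r))"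
    by (rule lookup_mult)
  also have "\<dots> = (\<Sum>l. Poly_Mapping.lookup p (w l) * (\<Sum>r. Poly_Mapping.lookup q r when w x = w l + r))"
    by (rule Sum_any.reindex_cong[OF b]) (simp add: fun_eq_iff)
  also have "\<dots> = (\<Sum>l. Poly_Mapping.lookup p l * (\<Sum>r. Poly_Mapping.lookup q r when x = l + r))"
    using p w inner unfolding weyl_invariant_def by simp
  also have "\<dots> = Poly_Mapping.lookup (p * q) x" by (rule lookup_mult[symmetric])
  finally show "Poly_Mapping.lookup (p * q) (w x) = Poly_Mapping.lookup (p * q) x" .
qed

lemma weyl_invariant_chi: assumes "z \<in> Zsp Del" shows "weyl_invariant (chi z)"
  unfolding weyl_invariant_def chi_def
proof (intro ballI allI)
  fix w x assume w: "w \<in> weyl"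
  have "z = w x \<longleftrightarrow> z = x" using weyl_inj_eq[OF w, of z x] weyl_fixes_Zsp[OF w assms] by auto
  then show "Poly_Mapping.lookup (Poly_Mapping.single z 1) (w x)
      = Poly_Mapping.lookup (Poly_Mapping.single z 1) x"
    by (simp add: lookup_single)
qed

lemma weyl_invariant_one: "weyl_invariant 1"
  unfolding weyl_invariant_def
proof (intro ballI allI)
  fix w x assume w: "w \<in> weyl"
  have "w x = 0 \<longleftrightarrow> x = 0" using weyl_inj_eq[OF w, of x 0] linear_0[OF weyl_linear[OF w]] by simp
  then show "Poly_Mapping.lookup 1 (w x) = Poly_Mapping.lookup 1 x" by (simp add: lookup_one)
qed

lemma weyl_invariant_power: "weyl_invariant p \<Longrightarrow> weyl_invariant (p ^ n)"
  by (induction n) (auto simp: weyl_invariant_one weyl_invariant_mult)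

lemma weyl_invariant_prod: "\<forall>a\<in>A. weyl_invariant (f a) \<Longrightarrow> weyl_invariant (prod f A)"
  by (induction A rule: infinite_finite_induct) (auto simp: weyl_invariant_one weyl_invariant_mult)

lemma weyl_invariant_sum: "\<forall>a\<in>A. weyl_invariant (f a) \<Longrightarrow> weyl_invariant (sum f A)"
  by (induction A rule: infinite_finite_induct) (auto simp: weyl_invariant_def lookup_add)

lemma weyl_invariant_of_int_mult: "weyl_invariant p \<Longrightarrow> weyl_invariant (of_int k * p)"
  unfolding weyl_invariant_def by (simp add: lookup_of_int_mult)

lemma lookup_orbsum:
  "Poly_Mapping.lookup (orbsum weyl l) y = (if y \<in> (\<lambda>w. w l) ` weyl then 1 else 0)"
proof -
  have "Poly_Mapping.lookup (orbsum weyl l) y = (\<Sum>x\<in>(\<lambda>w. w l) ` weyl. (if x = y then 1 else 0))"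
    unfolding orbsum_def chi_def lookup_sum by (intro sum.cong refl) (simp add: lookup_single when_def)
  also have "\<dots> = (if y \<in> (\<lambda>w. w l) ` weyl then 1 else 0)" using finite_weyl by (simp add: sum.delta')
  finally show ?thesis .
qed

lemma weyl_invariant_orbsum: "weyl_invariant (orbsum weyl l)"
  unfolding weyl_invariant_def lookup_orbsum
proof (intro ballI allI)
  fix w x assume w: "w \<in> weyl"
  obtain v where v: "v \<in> weyl" "\<And>x. v (w x) = x" "\<And>x. w (v x) = x" using weyl_inverse[OF w] by blast
  have "x \<in> (\<lambda>w. w l) ` weyl" if wx: "w x \<in> (\<lambda>w. w l) ` weyl"
  proof -
    obtain u where u: "u \<in> weyl" "w x = u l" using wx by blast
    then have "x = (v \<circ> u) l" using v(2) by (metis comp_apply)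
    then show ?thesis using weyl_comp[OF v(1) u(1)] by blast
  qed
  moreover have "w x \<in> (\<lambda>w. w l) ` weyl" if x: "x \<in> (\<lambda>w. w l) ` weyl"
  proof -
    obtain u where u: "u \<in> weyl" "x = u l" using x by blast
    then have "w x = (w \<circ> u) l" by simp
    then show ?thesis using weyl_comp[OF w u(1)] by blast
  qed
  ultimately show "(if w x \<in> (\<lambda>w. w l) ` weyl then 1 else 0)
      = (if x \<in> (\<lambda>w. w l) ` weyl then 1 else (0::int))" by auto
qed

lemma weyl_invariant_Psi: "u \<in> dominant_weights \<Longrightarrow> weyl_invariant (Psi weyl Del u)"
  unfolding Psi_def Let_def
  by (intro weyl_invariant_mult weyl_invariant_chi Psi_Zsp_part weyl_invariant_prod ballI
      weyl_invariant_power weyl_invariant_orbsum)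

text \<open>Orbit sums of distinct dominant weights have disjoint supports, since every orbit
  contains exactly one dominant point.\<close>
lemma lookup_orbsum_comb:
  assumes B: "finite B" "B \<subseteq> fdom Del" and d: "d \<in> fdom Del"
  shows "Poly_Mapping.lookup (\<Sum>v\<in>B. of_int (b v) * orbsum weyl v) d = (if d \<in> B then b d else 0)"
proof -
  have orbit: "d \<in> (\<lambda>w. w v) ` weyl \<longleftrightarrow> v = d" if "v \<in> B" for v
    using weyl_fixes_dominant[of _ v] weyl_id B(2) d that by (force simp: id_def)
  have "Poly_Mapping.lookup (\<Sum>v\<in>B. of_int (b v) * orbsum weyl v) d
      = (\<Sum>v\<in>B. b v * (if d \<in> (\<lambda>w. w v) ` weyl then 1 else 0))"
    by (simp add: lookup_sum lookup_of_int_mult lookup_orbsum)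
  also have "\<dots> = (\<Sum>v\<in>B. if v = d then b v else 0)"
    using orbit by (intro sum.cong) auto
  also have "\<dots> = (if d \<in> B then b d else 0)" using B(1) by (simp add: sum.delta')
  finally show ?thesis .
qed

definition dominant_part :: "('a \<Rightarrow>\<^sub>0 int) \<Rightarrow> 'a \<Rightarrow> int" where
  "dominant_part f v = (if v \<in> dominant_weights then Poly_Mapping.lookup f v else 0)"

lemma finite_dominant_part: "finite {v. dominant_part f v \<noteq> 0}"
  by (rule finite_subset[OF _ finite_keys[of f]]) (auto simp: dominant_part_def in_keys_iff)

lemma dominant_part_support: "{v. dominant_part f v \<noteq> 0} \<subseteq> fdom Del"
  by (auto simp: dominant_part_def split: if_splits)

lemma orbsum_expansion:
  assumes f: "weyl_invariant f" "Poly_Mapping.keys f \<subseteq> weights Del"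
  shows "f = (\<Sum>v\<in>{v. dominant_part f v \<noteq> 0}. of_int (dominant_part f v) * orbsum weyl v)"
    (is "f = ?R")
proof (rule poly_mapping_eqI)
  fix y
  obtain w where w: "w \<in> weyl" "w y \<in> fdom Del" using orbit_meets_fdom by blast
  have "weyl_invariant ?R"
    by (intro weyl_invariant_sum ballI weyl_invariant_of_int_mult weyl_invariant_orbsum)
  then have "Poly_Mapping.lookup ?R y = Poly_Mapping.lookup ?R (w y)"
    using w(1) unfolding weyl_invariant_def by simp
  also have "\<dots> = dominant_part f (w y)"
    using lookup_orbsum_comb[OF finite_dominant_part dominant_part_support w(2)] by simp
  also have "\<dots> = Poly_Mapping.lookup f (w y)"
    using w(2) f(2) by (auto simp: dominant_part_def in_keys_iff)
  also have "\<dots> = Poly_Mapping.lookup f y" using f(1) w(1) unfolding weyl_invariant_def by simp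
  finally show "Poly_Mapping.lookup f y = Poly_Mapping.lookup ?R y" by simp
qed

lemma orbsum_coeffs_unique:
  assumes "finite {v. b v \<noteq> 0}" "\<forall>v. b v \<noteq> 0 \<longrightarrow> v \<in> dominant_weights"
    and "f = (\<Sum>v\<in>{v. b v \<noteq> 0}. of_int (b v) * orbsum weyl v)"
  shows "b = dominant_part f"
proof
  fix v
  have "{v. b v \<noteq> 0} \<subseteq> fdom Del" using assms(2) by blast
  then show "b v = dominant_part f v"
    using assms lookup_orbsum_comb[of "{v. b v \<noteq> 0}" v b] by (auto simp: dominant_part_def)
qed

lemma orb_coeffs_eq_dominant_part:
  assumes "weyl_invariant f" "Poly_Mapping.keys f \<subseteq> weights Del"
  shows "orb_coeffs weyl Del f = dominant_part f"
  unfolding orb_coeffs_def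
proof (rule the_equality)
  show "finite {v. dominant_part f v \<noteq> 0} \<and>
      (\<forall>v. dominant_part f v \<noteq> 0 \<longrightarrow> v \<in> fdom Del \<inter> weights Del) \<and>
      f = (\<Sum>v\<in>{v. dominant_part f v \<noteq> 0}. of_int (dominant_part f v) * orbsum weyl v)"
    using finite_dominant_part orbsum_expansion[OF assms]
    by (auto simp: dominant_part_def split: if_splits)
qed (use orbsum_coeffs_unique in blast)

lemma orb_coeffs_Psi_nonzero:
  assumes u: "u \<in> dominant_weights" and v: "orb_coeffs weyl Del (Psi weyl Del u) v \<noteq> 0"
  shows "v \<in> orbit_hull_coset u"
proof -
  have "Poly_Mapping.keys (Psi weyl Del u) \<subseteq> weights Del"
    using keys_Psi[OF u] root_lattice_weights weights_diff[of u Del] u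
    by (force simp: orbit_hull_coset_def)
  then have "Poly_Mapping.lookup (Psi weyl Del u) v \<noteq> 0"
    using v orb_coeffs_eq_dominant_part[OF weyl_invariant_Psi[OF u]]
    by (simp add: dominant_part_def split: if_splits)
  then show ?thesis using keys_Psi[OF u] by (auto simp: in_keys_iff)
qed

end

lemma crystallographic_system_of_simple_system:
  assumes "finite_reflection_group W" "simple_system W \<Delta>" "\<Delta> \<subseteq> weights \<Delta>"
  obtains Phi where "crystallographic_system Phi \<Delta>" "W = genmon (refl ` Phi)"
proof -
  obtain Phi where rs: "root_system W Phi" and "\<Delta> \<subseteq> Phi" "independent \<Delta>"
    "\<forall>\<beta>\<in>Phi. \<exists>c. \<beta> = (\<Sum>\<alpha>\<in>\<Delta>. c \<alpha> *\<^sub>R \<alpha>) \<and> ((\<forall>\<alpha>\<in>\<Delta>. c \<alpha> \<ge> 0) \<or> (\<forall>\<alpha>\<in>\<Delta>. c \<alpha> \<le> 0))"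
    using assms(2) unfolding simple_system_def by blast
  with rs have "simple_root_system Phi \<Delta>"
    unfolding root_system_def by (intro simple_root_system.intro) auto
  moreover have W: "W = genmon (refl ` Phi)" using rs unfolding root_system_def by blast
  moreover have "finite W" using assms(1) unfolding finite_reflection_group_def by blast
  ultimately have "crystallographic_system Phi \<Delta>"
    using assms(3) by (auto intro!: crystallographic_system.intro crystallographic_system_axioms.intro
        simp: weights_def)
  then show ?thesis using that W by blast
qed

theorem lemma3p3:
  fixes W :: "('a::euclidean_space \<Rightarrow> 'a) set"
    and M S \<Delta> :: "'a set" and u :: 'a
  assumes "lattice M"
    and "finite_reflection_group W"
    and "\<forall>w\<in>W. w ` M \<subseteq> M"
    and "simple_system W \<Delta>"
    and "\<Delta> \<subseteq> M"
    and "M \<subseteq> weights \<Delta>"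
    and "saturated_affine_semigroup M S"
    and "\<forall>w\<in>W. w ` S = S"
    and "u \<in> fdom \<Delta> \<inter> S"
  shows "\<forall>v. orb_coeffs W \<Delta> (Psi W \<Delta> u) v \<noteq> 0 \<longrightarrow> v \<in> S"
proof (intro allI impI)
  fix v assume v: "orb_coeffs W \<Delta> (Psi W \<Delta> u) v \<noteq> 0"
  obtain Phi where "crystallographic_system Phi \<Delta>" and W: "W = genmon (refl ` Phi)"
    using crystallographic_system_of_simple_system assms(2,4-6) by blast
  then interpret crystallographic_system Phi \<Delta> by simp
  obtain B where M: "M = {\<Sum>b\<in>B. of_int (c b) *\<^sub>R b | c. True}"
    using assms(1) unfolding lattice_def by blast
  have "u \<in> M" using assms(7,9) unfolding saturated_affine_semigroup_def by blast
  then have "u \<in> dominant_weights" using assms(6,9) by blast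
  then have "v \<in> orbit_hull u" "u - v \<in> root_lattice"
    using orb_coeffs_Psi_nonzero v W by (auto simp: orbit_hull_coset_def)
  then have "v \<in> M"
    using int_comb_diff[OF M \<open>u \<in> M\<close>, of "u - v"] root_lattice_subset[OF M assms(5)] by auto
  then show "v \<in> S"
    using saturated_rat_orbit_hull[OF assms(7) finite_weyl] assms(8,9) \<open>v \<in> orbit_hull u\<close> W by blast
qed

end
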